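(* Assume that for Lebesgue-almost every irrational $\alpha\in(0,1)$ and every $c\in(0,1]$ one has $F_+^\alpha(c)=F_-^\alpha(c)$. Then for almost every $\alpha$, the function $c\mapsto F^\alpha(c):=\lim_{n\to\infty}S(\alpha,n,cn)^{1/cn}$ is continuous on $(0,1]$.
   Context: Every irrational $\alpha\in(0,1)$ has a unique continued fraction expansion $\alpha = 1/(a_1(\alpha)+1/(a_2(\alpha)+\cdots))$ with digits $a_i(\alpha)\in\mathbb{N}_{\ge1}$. For $1\le k\le n$ integers, \[ S(\alpha,n,k) := \binom{n}{k}^{-1}\sum_{1\le i_1<\cdots<i_k\le n} a_{i_1}(\alpha)\cdots a_{i_k}(\alpha), \] and $S(\alpha,n,cn)^{1/cn}$ means $S(\alpha,n,\lceil cn\rceil)^{1/\lceil cn\rceil}$. Define $F_+^\alpha(c)=\limsup_{n\to\infty}S(\alpha,n,cn)^{1/cn}$ and $F_-^\alpha(c)=\liminf_{n\to\infty}S(\alpha,n,cn)^{1/cn}$. *)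

theory Defs
  imports "HOL-Analysis.Analysis"
begin

definition gauss_map :: "real \<Rightarrow> real" where
  "gauss_map x = frac (1 / x)"

definition cf_digit :: "real \<Rightarrow> nat \<Rightarrow> nat" where
  "cf_digit \<alpha> i = nat \<lfloor>1 / (gauss_map ^^ (i - 1)) \<alpha>\<rfloor>"

definition S_mean :: "real \<Rightarrow> nat \<Rightarrow> nat \<Rightarrow> real" where
  "S_mean \<alpha> n k =
     (\<Sum>I\<in>{I. I \<subseteq> {1..n} \<and> card I = k}. \<Prod>i\<in>I. real (cf_digit \<alpha> i)) / real (n choose k)"

text \<open>S(alpha,n,cn)^{1/cn} with cn read as ceiling(c n).\<close>
definition S_root :: "real \<Rightarrow> real \<Rightarrow> nat \<Rightarrow> real" where
  "S_root \<alpha> c n = (let k = nat \<lceil>c * real n\<rceil> in S_mean \<alpha> n k powr (1 / real k))"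

definition F_plus :: "real \<Rightarrow> real \<Rightarrow> ereal" where
  "F_plus \<alpha> c = limsup (\<lambda>n. ereal (S_root \<alpha> c n))"

definition F_minus :: "real \<Rightarrow> real \<Rightarrow> ereal" where
  "F_minus \<alpha> c = liminf (\<lambda>n. ereal (S_root \<alpha> c n))"

definition F_lim :: "real \<Rightarrow> real \<Rightarrow> ereal" where
  "F_lim \<alpha> c = lim (\<lambda>n. ereal (S_root \<alpha> c n))"

end

theory Submission
  imports Defs
begin

text \<open>
  Write \<open>\<ell>\<^sub>n(c) = ln S(n, \<lceil>cn\<rceil>) / n\<close>. As all digits are \<open>\<ge> 1\<close>, the symmetric means
  \<open>S(n,k)\<close> are nondecreasing in \<open>k\<close> (double counting), so \<open>\<ell>\<^sub>n\<close> is nondecreasing in \<open>c\<close>.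
  AM-GM over the \<open>k\<close>-subsets of each \<open>m\<close>-subset gives \<open>S(n,m) \<le> e\<^sub>k\<^bsup>m/k-1\<^esup> S(n,k)\<close>, and
  with \<open>e\<^sub>k \<le> 2\<^sup>n S(n,k)\<close> this says that \<open>(\<ell>\<^sub>n(c) + ln 2) / (\<lceil>cn\<rceil>/n)\<close> is nonincreasing
  in \<open>c\<close>. In the limit, \<open>\<psi>(c) = c ln F(c)\<close> is nondecreasing while \<open>(\<psi>(c) + ln 2)/c\<close> is
  nonincreasing; these two monotonicities squeeze \<open>\<psi>\<close>, so it is continuous. The same two
  inequalities show that \<open>F\<close> is either identically \<open>\<infinity>\<close> or finite on all of \<open>(0,1]\<close>.
\<close>

definition ksubsets :: "'a set \<Rightarrow> nat \<Rightarrow> 'a set set" where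
  "ksubsets U k = {I. I \<subseteq> U \<and> card I = k}"

lemma finite_ksubsets: "finite U \<Longrightarrow> finite (ksubsets U k)"
  unfolding ksubsets_def by (rule finite_subset[of _ "Pow U"]) auto

lemma card_ksubsets: "finite U \<Longrightarrow> card (ksubsets U k) = card U choose k"
  unfolding ksubsets_def by (rule n_subsets)

lemma card_ksubsets_containing:
  assumes U: "finite U" and T: "T \<subseteq> U" "card T \<le> m"
  shows "card {J \<in> ksubsets U m. T \<subseteq> J} = (card U - card T) choose (m - card T)"
proof -
  have fT: "finite T" using U T finite_subset by blast
  have "bij_betw (\<lambda>K. K \<union> T) (ksubsets (U - T) (m - card T)) {J \<in> ksubsets U m. T \<subseteq> J}"
  proof (rule bij_betw_byWitness[where f' = "\<lambda>J. J - T"])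
    show "(\<lambda>K. K \<union> T) ` ksubsets (U - T) (m - card T) \<subseteq> {J \<in> ksubsets U m. T \<subseteq> J}"
    proof safe
      fix K assume K: "K \<in> ksubsets (U - T) (m - card T)"
      then have "finite K" "K \<inter> T = {}" using U by (auto simp: ksubsets_def finite_subset)
      then show "K \<union> T \<in> ksubsets U m"
        using K T fT by (auto simp: ksubsets_def card_Un_disjoint)
    qed
  qed (use fT in \<open>auto simp: ksubsets_def card_Diff_subset\<close>)
  then have "card {J \<in> ksubsets U m. T \<subseteq> J} = card (ksubsets (U - T) (m - card T))"
    by (simp add: bij_betw_same_card)
  then show ?thesis
    using U fT T by (simp add: card_ksubsets card_Diff_subset)
qed

lemma sum_ksubsets_of_ksubsets:
  fixes f :: "'a set \<Rightarrow> 'b::comm_semiring_1"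
  assumes U: "finite U" and "k \<le> m"
  shows "(\<Sum>J\<in>ksubsets U m. \<Sum>I\<in>ksubsets J k. f I)
       = of_nat ((card U - k) choose (m - k)) * (\<Sum>I\<in>ksubsets U k. f I)"
proof -
  have "(\<Sum>J\<in>ksubsets U m. \<Sum>I\<in>ksubsets J k. f I)
      = (\<Sum>J\<in>ksubsets U m. \<Sum>I\<in>{I \<in> ksubsets U k. I \<subseteq> J}. f I)"
    by (intro sum.cong refl) (auto simp: ksubsets_def)
  also have "\<dots> = (\<Sum>I\<in>ksubsets U k. \<Sum>J\<in>{J \<in> ksubsets U m. I \<subseteq> J}. f I)"
    by (rule sum.swap_restrict) (simp_all add: finite_ksubsets U)
  also have "\<dots> = (\<Sum>I\<in>ksubsets U k. of_nat ((card U - k) choose (m - k)) * f I)"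
  proof (intro sum.cong refl)
    fix I assume "I \<in> ksubsets U k"
    then have "card {J \<in> ksubsets U m. I \<subseteq> J} = (card U - k) choose (m - k)"
      using assms card_ksubsets_containing[OF U, of I m] by (simp add: ksubsets_def)
    then show "(\<Sum>J\<in>{J \<in> ksubsets U m. I \<subseteq> J}. f I) = of_nat ((card U - k) choose (m - k)) * f I"
      by simp
  qed
  finally show ?thesis by (simp add: sum_distrib_left)
qed

lemma prod_ksubsets_eq_power:
  fixes a :: "'a \<Rightarrow> 'b::comm_semiring_1"
  assumes J: "finite J" and "1 \<le> k"
  shows "(\<Prod>I\<in>ksubsets J k. \<Prod>i\<in>I. a i) = (\<Prod>i\<in>J. a i) ^ ((card J - 1) choose (k - 1))"
proof -
  have "(\<Prod>I\<in>ksubsets J k. \<Prod>i\<in>I. a i) = (\<Prod>I\<in>ksubsets J k. \<Prod>i\<in>{i \<in> J. i \<in> I}. a i)"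
    by (intro prod.cong refl) (auto simp: ksubsets_def intro: prod.cong)
  also have "\<dots> = (\<Prod>i\<in>J. \<Prod>I\<in>{I \<in> ksubsets J k. i \<in> I}. a i)"
    by (rule prod.swap_restrict) (simp_all add: finite_ksubsets J)
  also have "\<dots> = (\<Prod>i\<in>J. a i ^ ((card J - 1) choose (k - 1)))"
  proof (rule prod.cong[OF refl])
    fix i assume "i \<in> J"
    then have "card {I \<in> ksubsets J k. {i} \<subseteq> I} = (card J - 1) choose (k - 1)"
      using card_ksubsets_containing[OF J, of "{i}" k] assms by simp
    then show "(\<Prod>I\<in>{I \<in> ksubsets J k. i \<in> I}. a i) = a i ^ ((card J - 1) choose (k - 1))"
      by simp
  qed
  finally show ?thesis by (simp add: prod_power_distrib)
qed

definition elem_sym :: "('a \<Rightarrow> real) \<Rightarrow> 'a set \<Rightarrow> nat \<Rightarrow> real" where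
  "elem_sym a U k = (\<Sum>I\<in>ksubsets U k. \<Prod>i\<in>I. a i)"

definition elem_sym_mean :: "('a \<Rightarrow> real) \<Rightarrow> 'a set \<Rightarrow> nat \<Rightarrow> real" where
  "elem_sym_mean a U k = elem_sym a U k / real (card U choose k)"

lemma double_sum_ksubsets_eq_elem_sym_mean:
  assumes U: "finite U" and km: "k \<le> m" and mU: "m \<le> card U"
  shows "(\<Sum>J\<in>ksubsets U m. \<Sum>I\<in>ksubsets J k. \<Prod>i\<in>I. a i)
           / (real (m choose k) * real (card U choose m)) = elem_sym_mean a U k"
proof -
  have "real (card U choose m) * real (m choose k) = real (card U choose k) * real ((card U - k) choose (m - k))"
    using choose_mult[OF km mU] by (metis of_nat_mult)
  moreover have "real ((card U - k) choose (m - k)) > 0" "real (card U choose k) > 0"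
    using km mU by (simp_all add: zero_less_binomial)
  ultimately show ?thesis
    using sum_ksubsets_of_ksubsets[OF U km]
    by (simp add: elem_sym_def elem_sym_mean_def field_simps)
qed

lemma binomial_le_elem_sym:
  assumes "finite U" and a: "\<And>i. i \<in> U \<Longrightarrow> 1 \<le> a i"
  shows "real (card U choose k) \<le> elem_sym a U k"
proof -
  have "(\<Sum>I\<in>ksubsets U k. 1) \<le> elem_sym a U k"
    unfolding elem_sym_def using a by (intro sum_mono prod_ge_1) (auto simp: ksubsets_def)
  then show ?thesis using assms by (simp add: card_ksubsets)
qed

lemma one_le_elem_sym_mean:
  assumes "finite U" "\<And>i. i \<in> U \<Longrightarrow> 1 \<le> a i" "k \<le> card U"
  shows "1 \<le> elem_sym_mean a U k"
  using binomial_le_elem_sym[OF assms(1,2), where k=k] zero_less_binomial[OF assms(3)]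
  by (simp add: elem_sym_mean_def)

lemma elem_sym_mean_mono:
  assumes U: "finite U" and a: "\<And>i. i \<in> U \<Longrightarrow> 1 \<le> a i" and km: "k \<le> m" and mU: "m \<le> card U"
  shows "elem_sym_mean a U k \<le> elem_sym_mean a U m"
proof -
  have "(\<Sum>J\<in>ksubsets U m. \<Sum>I\<in>ksubsets J k. \<Prod>i\<in>I. a i)
      \<le> (\<Sum>J\<in>ksubsets U m. \<Sum>I\<in>ksubsets J k. \<Prod>i\<in>J. a i)"
    using U a by (intro sum_mono prod_mono2) (auto simp: ksubsets_def finite_subset order_trans[OF zero_le_one])
  also have "\<dots> = (\<Sum>J\<in>ksubsets U m. real (m choose k) * (\<Prod>i\<in>J. a i))"
  proof (intro sum.cong refl)
    fix J assume "J \<in> ksubsets U m"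
    then have "finite J" "card J = m" using U by (auto simp: ksubsets_def finite_subset)
    then show "(\<Sum>I\<in>ksubsets J k. \<Prod>i\<in>J. a i) = real (m choose k) * (\<Prod>i\<in>J. a i)"
      by (simp add: card_ksubsets)
  qed
  also have "\<dots> = real (m choose k) * elem_sym a U m"
    by (simp add: elem_sym_def sum_distrib_left)
  finally have "elem_sym_mean a U k \<le> real (m choose k) * elem_sym a U m
                  / (real (m choose k) * real (card U choose m))"
    using double_sum_ksubsets_eq_elem_sym_mean[OF U km mU, of a]
    by (metis divide_right_mono of_nat_0_le_iff mult_nonneg_nonneg)
  then show ?thesis
    using km by (simp add: elem_sym_mean_def zero_less_binomial)
qed

lemma prod_powr_le_mean_ksubsets:
  assumes J: "finite J" and k: "1 \<le> k" "k \<le> card J" and a: "\<And>i. i \<in> J \<Longrightarrow> 0 < a i"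
  shows "(\<Prod>i\<in>J. a i) powr (real k / real (card J))
           \<le> (\<Sum>I\<in>ksubsets J k. \<Prod>i\<in>I. a i) / real (card J choose k)"
proof -
  let ?S = "ksubsets J k" and ?m = "card J"
  have card_S: "card ?S = ?m choose k" and "finite ?S" using J by (simp_all add: card_ksubsets finite_ksubsets)
  moreover have "?S \<noteq> {}" using card_S k by (metis binomial_eq_0_iff card.empty not_less)
  moreover have "0 \<le> (\<Prod>i\<in>I. a i)" if "I \<in> ?S" for I
    using that a by (auto simp: ksubsets_def intro!: less_imp_le prod_pos)
  ultimately have amgm: "(\<Prod>I\<in>?S. \<Prod>i\<in>I. a i) powr (1 / real (?m choose k))
                          \<le> (\<Sum>I\<in>?S. \<Prod>i\<in>I. a i) / real (?m choose k)"
    using arith_geom_mean[of ?S "\<lambda>I. \<Prod>i\<in>I. a i"] by (simp add: sum_divide_distrib)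
  have P: "0 < (\<Prod>i\<in>J. a i)" using a by (simp add: prod_pos)
  have "real k * real (?m choose k) = real ?m * real ((?m - 1) choose (k - 1))"
    using times_binomial_minus1_eq[of k ?m] k by (metis of_nat_mult One_nat_def Suc_le_eq)
  then have "real ((?m - 1) choose (k - 1)) / real (?m choose k) = real k / real ?m"
    using k by (simp add: field_simps zero_less_binomial)
  then have "(\<Prod>I\<in>?S. \<Prod>i\<in>I. a i) powr (1 / real (?m choose k)) = (\<Prod>i\<in>J. a i) powr (real k / real ?m)"
    using P by (simp add: prod_ksubsets_eq_power[OF J k(1)] powr_realpow[symmetric] powr_powr)
  then show ?thesis using amgm by simp
qed

lemma elem_sym_mean_le_powr:
  assumes U: "finite U" and a: "\<And>i. i \<in> U \<Longrightarrow> 1 \<le> a i"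
    and k: "1 \<le> k" and km: "k \<le> m" and mU: "m \<le> card U"
  shows "elem_sym_mean a U m \<le> elem_sym a U k powr (real m / real k - 1) * elem_sym_mean a U k"
proof -
  define P where "P I = (\<Prod>i\<in>I. a i)" for I
  define A where "A J = (\<Sum>I\<in>ksubsets J k. P I) / real (m choose k)" for J
  define E where "E = elem_sym a U k powr (real m / real k - 1)"
  have P_ge: "1 \<le> P I" if "I \<subseteq> U" for I
    unfolding P_def using that a by (auto intro!: prod_ge_1)
  have exp_ge: "0 \<le> real m / real k - 1" using k km by (simp add: field_simps)
  have P_le: "P J \<le> A J * E" if J: "J \<in> ksubsets U m" for J
  proof -
    have fJ: "finite J" and JU: "J \<subseteq> U" and cJ: "card J = m"
      using J U by (auto simp: ksubsets_def finite_subset)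
    have root: "P J powr (real k / real m) \<le> A J"
      using prod_powr_le_mean_ksubsets[OF fJ k(1)] km cJ JU a
      unfolding A_def P_def by (metis less_le_trans order.trans subsetD zero_less_one)
    have "0 < P J powr (real k / real m)" using P_ge[OF JU] by simp
    then have A_pos: "0 < A J" using root by linarith
    have "(\<Sum>I\<in>ksubsets J k. P I) \<le> elem_sym a U k"
      unfolding elem_sym_def P_def[symmetric]
      using JU U P_ge by (intro sum_mono2) (auto simp: finite_ksubsets ksubsets_def order_trans[OF zero_le_one])
    moreover have "1 \<le> real (m choose k)"
      using km by (simp add: Suc_leI zero_less_binomial)
    moreover have "0 \<le> (\<Sum>I\<in>ksubsets J k. P I)"
      using A_pos by (simp add: A_def zero_less_divide_iff)
    ultimately have "A J \<le> elem_sym a U k"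
      unfolding A_def using divide_left_mono[of 1 "real (m choose k)"] by fastforce
    have "P J = (P J powr (real k / real m)) powr (real m / real k)"
      using P_ge[OF JU] k km by (simp add: powr_powr)
    also have "\<dots> \<le> A J powr (real m / real k)"
      using root k km by (intro powr_mono2) auto
    also have "\<dots> = A J * A J powr (real m / real k - 1)"
      using A_pos by (simp add: powr_diff)
    also have "\<dots> \<le> A J * E"
      unfolding E_def using A_pos \<open>A J \<le> elem_sym a U k\<close> exp_ge by (simp add: powr_mono2)
    finally show ?thesis .
  qed
  have "elem_sym a U m \<le> (\<Sum>J\<in>ksubsets U m. A J * E)"
    unfolding elem_sym_def P_def[symmetric] by (rule sum_mono) (rule P_le)
  also have "\<dots> = E * ((\<Sum>J\<in>ksubsets U m. \<Sum>I\<in>ksubsets J k. P I) / real (m choose k))"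
    by (simp add: A_def sum_distrib_left sum_divide_distrib mult.commute)
  finally have "elem_sym_mean a U m
      \<le> E * ((\<Sum>J\<in>ksubsets U m. \<Sum>I\<in>ksubsets J k. P I) / (real (m choose k) * real (card U choose m)))"
    unfolding elem_sym_mean_def using km mU
    by (simp add: divide_right_mono zero_less_binomial field_simps)
  then show ?thesis
    unfolding P_def E_def double_sum_ksubsets_eq_elem_sym_mean[OF U km mU] .
qed

lemma elem_sym_mean_log_bound:
  assumes U: "finite U" and a: "\<And>i. i \<in> U \<Longrightarrow> 1 \<le> a i"
    and k: "1 \<le> k" and km: "k \<le> m" and mU: "m \<le> card U"
  shows "(ln (elem_sym_mean a U m) + card U * ln 2) / m \<le> (ln (elem_sym_mean a U k) + card U * ln 2) / k"
proof -
  define x where "x j = ln (elem_sym_mean a U j)" for j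
  define p where "p = real m / real k - 1"
  have mean_ge: "1 \<le> elem_sym_mean a U j" if "j \<le> card U" for j
    by (rule one_le_elem_sym_mean[OF U a that])
  have p_ge: "0 \<le> p" using k km by (simp add: p_def field_simps)
  have binom_pos: "0 < real (card U choose k)" using km mU by (simp add: zero_less_binomial)
  have e: "elem_sym a U k = real (card U choose k) * elem_sym_mean a U k"
    using binom_pos by (simp add: elem_sym_mean_def)
  have "real (card U choose k) \<le> 2 ^ card U"
    by (metis binomial_le_pow2 of_nat_le_iff of_nat_numeral of_nat_power)
  then have "ln (real (card U choose k)) \<le> card U * ln 2"
    using binom_pos by (metis ln_le_cancel_iff ln_realpow zero_less_numeral zero_less_power)
  then have ln_e: "ln (elem_sym a U k) \<le> card U * ln 2 + x k"
    using binom_pos mean_ge[of k] km mU by (simp add: e x_def ln_mult)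
  have e_pos: "0 < elem_sym a U k" using e binom_pos mean_ge[of k] km mU by simp
  have "x m \<le> ln (elem_sym a U k powr p * elem_sym_mean a U k)"
    unfolding x_def p_def using elem_sym_mean_le_powr[of U a, OF U a k km mU] mean_ge[OF mU] by simp
  also have "\<dots> = p * ln (elem_sym a U k) + x k"
    using e_pos mean_ge[of k] km mU by (simp add: ln_mult ln_powr x_def)
  also have "\<dots> \<le> p * (card U * ln 2 + x k) + x k"
    using ln_e p_ge by (simp add: mult_left_mono)
  finally have "x m + card U * ln 2 \<le> (real m / real k) * (x k + card U * ln 2)"
    by (simp add: p_def algebra_simps)
  then show ?thesis
    using k km by (simp add: x_def field_simps)
qed

lemma continuous_on_if_mono_and_shifted_quotient_antimono:
  fixes f :: "real \<Rightarrow> real"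
  assumes S: "S \<subseteq> {0<..}" and mono: "mono_on S f"
    and anti: "antimono_on S (\<lambda>x. (f x + L) / x)"
  shows "continuous_on S f"
  unfolding continuous_on_def
proof
  fix c assume c: "c \<in> S"
  define g where "g y = \<bar>f c + L\<bar> * \<bar>y - c\<bar> / min y c" for y
  have c_pos: "0 < c" using c S by auto
  have bound: "\<bar>f y - f c\<bar> \<le> g y" if y: "y \<in> S" for y
  proof (cases "c \<le> y")
    case True
    have "y > 0" using y S by auto
    have "(f y + L) / y \<le> (f c + L) / c" using monotone_onD[OF anti c y True] by simp
    then have "f y + L \<le> y / c * (f c + L)"
      using c_pos \<open>y > 0\<close> by (simp add: field_simps)
    then have "f y - f c \<le> (y - c) * (f c + L) / c"
      using c_pos by (simp add: field_simps)
    also have "\<dots> \<le> g y"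
      unfolding g_def using True c_pos
      by (simp add: min_absorb2 divide_right_mono mult.commute mult_left_mono)
    finally show ?thesis using monotone_onD[OF mono c y True] by simp
  next
    case False
    have "y > 0" using y S by auto
    have fyc: "f y \<le> f c" using monotone_onD[OF mono y c] False by simp
    have "(f c + L) / c \<le> (f y + L) / y" using monotone_onD[OF anti y c] False by simp
    then have "f c + L \<le> c / y * (f y + L)"
      using c_pos \<open>y > 0\<close> by (simp add: field_simps)
    then have "f c - f y \<le> (c - y) * (f y + L) / y"
      using \<open>y > 0\<close> by (simp add: field_simps)
    also have "\<dots> \<le> (c - y) * (f c + L) / y"
      using False fyc \<open>y > 0\<close> by (intro divide_right_mono mult_left_mono) auto
    also have "\<dots> \<le> g y"
      unfolding g_def using False \<open>y > 0\<close>
      by (simp add: min_absorb1 divide_right_mono mult.commute mult_left_mono)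
    finally show ?thesis using fyc by simp
  qed
  have "(g \<longlongrightarrow> g c) (at c within S)"
    unfolding g_def using c_pos by (intro tendsto_intros) auto
  then have g_lim: "(g \<longlongrightarrow> 0) (at c within S)" by (simp add: g_def)
  show "(f \<longlongrightarrow> f c) (at c within S)"
  proof (rule tendsto_sandwich)
    show "\<forall>\<^sub>F y in at c within S. f c - g y \<le> f y" "\<forall>\<^sub>F y in at c within S. f y \<le> f c + g y"
      using bound by (auto simp: eventually_at_filter abs_le_iff intro!: always_eventually)
        (smt (verit))+
    show "((\<lambda>y. f c - g y) \<longlongrightarrow> f c) (at c within S)" "((\<lambda>y. f c + g y) \<longlongrightarrow> f c) (at c within S)"
      using tendsto_diff[OF tendsto_const g_lim] tendsto_add[OF tendsto_const g_lim] by simp_all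
  qed
qed

lemma ceiling_mult_bounds:
  assumes c: "0 < c" "c \<le> 1" and n: "1 \<le> n"
  shows "1 \<le> nat \<lceil>c * real n\<rceil>" "nat \<lceil>c * real n\<rceil> \<le> n"
    "c * real n \<le> real (nat \<lceil>c * real n\<rceil>)" "real (nat \<lceil>c * real n\<rceil>) \<le> c * real n + 1"
proof -
  have "0 < c * real n" "c * real n \<le> real n" using c n by auto
  then show "1 \<le> nat \<lceil>c * real n\<rceil>" "nat \<lceil>c * real n\<rceil> \<le> n"
    "c * real n \<le> real (nat \<lceil>c * real n\<rceil>)" "real (nat \<lceil>c * real n\<rceil>) \<le> c * real n + 1"
    by (linarith, metis ceiling_mono ceiling_of_nat nat_int nat_mono, linarith, linarith)
qed

definition ceiling_ratio :: "real \<Rightarrow> nat \<Rightarrow> real" where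
  "ceiling_ratio c n = real (nat \<lceil>c * real n\<rceil>) / real n"

lemma ceiling_ratio_bounds:
  assumes "0 < c" "c \<le> 1" "1 \<le> n"
  shows "c \<le> ceiling_ratio c n" "ceiling_ratio c n \<le> c + 1 / real n" "ceiling_ratio c n \<le> 1"
proof -
  have "real (nat \<lceil>c * real n\<rceil>) \<le> real n" using ceiling_mult_bounds(2)[OF assms] by linarith
  with ceiling_mult_bounds(3,4)[OF assms] assms
  show "c \<le> ceiling_ratio c n" "ceiling_ratio c n \<le> c + 1 / real n" "ceiling_ratio c n \<le> 1"
    by (simp_all add: ceiling_ratio_def field_simps)
qed

lemma ceiling_ratio_tendsto:
  assumes "0 < c" "c \<le> 1"
  shows "ceiling_ratio c \<longlonglongrightarrow> c"
proof (rule tendsto_sandwich)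
  show "\<forall>\<^sub>F n in sequentially. c \<le> ceiling_ratio c n" "\<forall>\<^sub>F n in sequentially. ceiling_ratio c n \<le> c + 1 / real n"
    using ceiling_ratio_bounds[OF assms] by (auto simp: eventually_sequentially)
  show "(\<lambda>n. c + 1 / real n) \<longlonglongrightarrow> c"
    using tendsto_add[OF tendsto_const lim_1_over_n, of c] by simp
qed simp

definition sym_root :: "(nat \<Rightarrow> real) \<Rightarrow> real \<Rightarrow> nat \<Rightarrow> real" where
  "sym_root a c n = (let k = nat \<lceil>c * real n\<rceil> in elem_sym_mean a {1..n} k powr (1 / real k))"

definition log_rate :: "(nat \<Rightarrow> real) \<Rightarrow> real \<Rightarrow> nat \<Rightarrow> real" where
  "log_rate a c n = ln (elem_sym_mean a {1..n} (nat \<lceil>c * real n\<rceil>)) / real n"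

context
  fixes a :: "nat \<Rightarrow> real"
  assumes ge1: "\<And>i. 1 \<le> a i"
begin

lemma one_le_elem_sym_mean_ceiling:
  assumes "0 < c" "c \<le> 1" "1 \<le> n"
  shows "1 \<le> elem_sym_mean a {1..n} (nat \<lceil>c * real n\<rceil>)"
  using one_le_elem_sym_mean[of "{1..n}" a] ge1 ceiling_mult_bounds(2)[OF assms] by simp

lemma log_rate_nonneg:
  assumes "0 < c" "c \<le> 1" "1 \<le> n"
  shows "0 \<le> log_rate a c n"
  using one_le_elem_sym_mean_ceiling[OF assms] by (simp add: log_rate_def)

lemma ln_sym_root:
  assumes "0 < c" "c \<le> 1" "1 \<le> n"
  shows "ln (sym_root a c n) = log_rate a c n / ceiling_ratio c n"
  using one_le_elem_sym_mean_ceiling[OF assms] ceiling_mult_bounds(1)[OF assms] assms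
  by (simp add: sym_root_def log_rate_def ceiling_ratio_def ln_powr)

lemma one_le_sym_root:
  assumes "0 < c" "c \<le> 1" "1 \<le> n"
  shows "1 \<le> sym_root a c n"
  using one_le_elem_sym_mean_ceiling[OF assms] by (simp add: sym_root_def Let_def ge_one_powr_ge_zero)

lemma log_rate_mono:
  assumes c: "0 < c1" "c1 \<le> c2" "c2 \<le> 1" and n: "1 \<le> n"
  shows "log_rate a c1 n \<le> log_rate a c2 n"
proof -
  have "nat \<lceil>c1 * real n\<rceil> \<le> nat \<lceil>c2 * real n\<rceil>"
    using c by (intro nat_mono ceiling_mono mult_right_mono) auto
  then have "elem_sym_mean a {1..n} (nat \<lceil>c1 * real n\<rceil>) \<le> elem_sym_mean a {1..n} (nat \<lceil>c2 * real n\<rceil>)"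
    using ge1 ceiling_mult_bounds(2)[of c2 n] c n by (intro elem_sym_mean_mono) auto
  then show ?thesis
    using one_le_elem_sym_mean_ceiling[of c1 n] c n by (simp add: log_rate_def divide_right_mono)
qed

lemma log_rate_shifted_quotient_antimono:
  assumes c: "0 < c1" "c1 \<le> c2" "c2 \<le> 1" and n: "1 \<le> n"
  shows "(log_rate a c2 n + ln 2) / ceiling_ratio c2 n \<le> (log_rate a c1 n + ln 2) / ceiling_ratio c1 n"
proof -
  have shifted: "(log_rate a c n + ln 2) / ceiling_ratio c n
      = (ln (elem_sym_mean a {1..n} (nat \<lceil>c * real n\<rceil>)) + real (card {1..n}) * ln 2) / nat \<lceil>c * real n\<rceil>"
    for c using n by (simp add: log_rate_def ceiling_ratio_def add_divide_distrib distrib_right)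
  have "nat \<lceil>c1 * real n\<rceil> \<le> nat \<lceil>c2 * real n\<rceil>"
    using c by (intro nat_mono ceiling_mono mult_right_mono) auto
  then show ?thesis
    unfolding shifted using ge1 ceiling_mult_bounds(1)[of c1 n] ceiling_mult_bounds(2)[of c2 n] c n
    by (intro elem_sym_mean_log_bound) auto
qed

lemma sym_root_at_top_iff_log_rate:
  assumes c: "0 < c" "c \<le> 1"
  shows "filterlim (sym_root a c) at_top sequentially \<longleftrightarrow> filterlim (log_rate a c) at_top sequentially"
proof
  have ratio_ln: "log_rate a c n = ceiling_ratio c n * ln (sym_root a c n)" if "1 \<le> n" for n
    using ln_sym_root[OF c that] ceiling_ratio_bounds(1)[OF c that] c by simp
  assume "filterlim (sym_root a c) at_top sequentially"
  then have "filterlim (\<lambda>n. ln (sym_root a c n)) at_top sequentially"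
    by (rule filterlim_compose[OF ln_at_top])
  then have "filterlim (\<lambda>n. c * ln (sym_root a c n)) at_top sequentially"
    using c(1) by (rule filterlim_tendsto_pos_mult_at_top[OF tendsto_const, rotated])
  moreover have "\<forall>\<^sub>F n in sequentially. c * ln (sym_root a c n) \<le> log_rate a c n"
    using eventually_ge_at_top[of 1]
  proof eventually_elim
    case (elim n)
    then show ?case
      using ratio_ln[OF elim] ceiling_ratio_bounds(1)[OF c elim] one_le_sym_root[OF c elim]
      by (simp add: mult_right_mono)
  qed
  ultimately show "filterlim (log_rate a c) at_top sequentially"
    by (rule filterlim_at_top_mono)
next
  assume "filterlim (log_rate a c) at_top sequentially"
  moreover have "\<forall>\<^sub>F n in sequentially. log_rate a c n \<le> ln (sym_root a c n)"
    using eventually_ge_at_top[of 1]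
  proof eventually_elim
    case (elim n)
    then show ?case
      using ln_sym_root[OF c elim] ceiling_ratio_bounds(1,3)[OF c elim] log_rate_nonneg[OF c elim] c
      by (simp add: le_divide_eq mult_left_le)
  qed
  ultimately have "filterlim (\<lambda>n. ln (sym_root a c n)) at_top sequentially"
    by (rule filterlim_at_top_mono)
  then have "filterlim (\<lambda>n. exp (ln (sym_root a c n))) at_top sequentially"
    by (rule filterlim_compose[OF exp_at_top])
  moreover have "\<forall>\<^sub>F n in sequentially. exp (ln (sym_root a c n)) = sym_root a c n"
    using eventually_ge_at_top[of 1]
  proof eventually_elim
    case (elim n)
    show ?case using one_le_sym_root[OF c elim] by simp
  qed
  ultimately show "filterlim (sym_root a c) at_top sequentially"
    by (rule filterlim_cong[OF refl refl, THEN iffD1, rotated])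
qed

lemma log_rate_tendsto:
  assumes c: "0 < c" "c \<le> 1" and lim: "sym_root a c \<longlonglongrightarrow> f"
  shows "log_rate a c \<longlonglongrightarrow> c * ln f"
proof -
  have "\<forall>\<^sub>F n in sequentially. 1 \<le> sym_root a c n"
    using eventually_ge_at_top[of 1] by (rule eventually_mono) (rule one_le_sym_root[OF c])
  with lim have "1 \<le> f" by (rule tendsto_lowerbound) simp
  then have "(\<lambda>n. ceiling_ratio c n * ln (sym_root a c n)) \<longlonglongrightarrow> c * ln f"
    by (intro tendsto_mult ceiling_ratio_tendsto[OF c] tendsto_ln[OF lim]) auto
  moreover have "\<forall>\<^sub>F n in sequentially. ceiling_ratio c n * ln (sym_root a c n) = log_rate a c n"
    using eventually_ge_at_top[of 1]
    by eventually_elim (use ln_sym_root[OF c] ceiling_ratio_bounds(1)[OF c] c in force)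
  ultimately show ?thesis by (rule Lim_transform_eventually)
qed

lemma log_rate_at_top_spread:
  assumes c0: "0 < c0" "c0 \<le> 1" and c: "0 < c" "c \<le> 1"
    and lim0: "filterlim (log_rate a c0) at_top sequentially"
  shows "filterlim (log_rate a c) at_top sequentially"
proof (cases "c0 \<le> c")
  case True
  have "\<forall>\<^sub>F n in sequentially. log_rate a c0 n \<le> log_rate a c n"
    using eventually_ge_at_top[of 1] by (rule eventually_mono) (rule log_rate_mono[OF c0(1) True c(2)])
  with lim0 show ?thesis by (rule filterlim_at_top_mono)
next
  case False
  have "filterlim (\<lambda>n. ln 2 + log_rate a c0 n) at_top sequentially"
    by (rule filterlim_tendsto_add_at_top[OF tendsto_const lim0])
  then have "filterlim (\<lambda>n. c * (ln 2 + log_rate a c0 n)) at_top sequentially"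
    using c(1) by (rule filterlim_tendsto_pos_mult_at_top[OF tendsto_const, rotated])
  then have "filterlim (\<lambda>n. - ln 2 + c * (ln 2 + log_rate a c0 n)) at_top sequentially"
    by (rule filterlim_tendsto_add_at_top[OF tendsto_const])
  moreover have "\<forall>\<^sub>F n in sequentially. - ln 2 + c * (ln 2 + log_rate a c0 n) \<le> log_rate a c n"
    using eventually_ge_at_top[of 1]
  proof eventually_elim
    case (elim n)
    have anti: "(log_rate a c0 n + ln 2) / ceiling_ratio c0 n \<le> (log_rate a c n + ln 2) / ceiling_ratio c n"
      using log_rate_shifted_quotient_antimono[OF c(1) _ c0(2) elim] False by simp
    have "0 \<le> ln 2 + log_rate a c0 n" using log_rate_nonneg[OF c0 elim] by simp
    then have "c * (ln 2 + log_rate a c0 n) \<le> ceiling_ratio c n * ((ln 2 + log_rate a c0 n) / ceiling_ratio c0 n)"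
      using ceiling_ratio_bounds[OF c elim] ceiling_ratio_bounds[OF c0 elim] c0 c
      by (intro mult_mono) (auto simp: le_divide_eq mult_left_le)
    also have "\<dots> \<le> log_rate a c n + ln 2"
      using anti ceiling_ratio_bounds(1)[OF c elim] c by (simp add: le_divide_eq add.commute mult.commute)
    finally show ?case by simp
  qed
  ultimately show ?thesis by (rule filterlim_at_top_mono)
qed


lemma lim_sym_root_finite:
  assumes c: "0 < c" "c \<le> 1" and conv: "convergent (\<lambda>n. ereal (sym_root a c n))"
    and not_top: "\<not> filterlim (log_rate a c) at_top sequentially"
  shows "log_rate a c \<longlonglongrightarrow> lim (log_rate a c)"
    and "lim (\<lambda>n. ereal (sym_root a c n)) = ereal (exp (lim (log_rate a c) / c))"
proof -
  obtain F where F: "(\<lambda>n. ereal (sym_root a c n)) \<longlonglongrightarrow> F"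
    using conv by (auto simp: convergent_def)
  have "\<forall>\<^sub>F n in sequentially. 1 \<le> ereal (sym_root a c n)"
    using eventually_ge_at_top[of 1] by (rule eventually_mono) (simp add: one_le_sym_root[OF c])
  with F have "1 \<le> F" by (rule tendsto_lowerbound) simp
  moreover have "F \<noteq> \<infinity>"
  proof
    assume "F = \<infinity>"
    then have "filterlim (sym_root a c) at_top sequentially"
      using F by (simp add: tendsto_PInfty_eq_at_top)
    then show False using not_top sym_root_at_top_iff_log_rate[OF c] by simp
  qed
  ultimately obtain f where f: "F = ereal f" by (cases F) auto
  with F have lim_f: "sym_root a c \<longlonglongrightarrow> f" by simp
  have "1 \<le> f" using \<open>1 \<le> F\<close> f by simp
  have lim_log: "log_rate a c \<longlonglongrightarrow> c * ln f"
    by (rule log_rate_tendsto[OF c lim_f])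
  then show "log_rate a c \<longlonglongrightarrow> lim (log_rate a c)"
    by (simp add: limI)
  show "lim (\<lambda>n. ereal (sym_root a c n)) = ereal (exp (lim (log_rate a c) / c))"
    using limI[OF F] limI[OF lim_log] f \<open>1 \<le> f\<close> c by simp
qed

theorem continuous_on_lim_sym_root:
  assumes conv: "\<And>c. c \<in> {0<..1} \<Longrightarrow> convergent (\<lambda>n. ereal (sym_root a c n))"
  shows "continuous_on {0<..1} (\<lambda>c. lim (\<lambda>n. ereal (sym_root a c n)))"
proof (cases "\<exists>c0\<in>{0<..1}. filterlim (log_rate a c0) at_top sequentially")
  case True
  then obtain c0 where c0: "0 < c0" "c0 \<le> 1" and lim0: "filterlim (log_rate a c0) at_top sequentially"
    by auto
  have "lim (\<lambda>n. ereal (sym_root a c n)) = \<infinity>" if "c \<in> {0<..1}" for c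
    using that log_rate_at_top_spread[OF c0 _ _ lim0] sym_root_at_top_iff_log_rate[of c]
    by (auto intro!: limI simp: tendsto_PInfty_eq_at_top)
  then show ?thesis
    by (rule continuous_on_cong[THEN iffD2, OF refl _ continuous_on_const]) simp
next
  case False
  define \<psi> where "\<psi> c = lim (log_rate a c)" for c
  have \<psi>: "log_rate a c \<longlonglongrightarrow> \<psi> c" "lim (\<lambda>n. ereal (sym_root a c n)) = ereal (exp (\<psi> c / c))"
    if "c \<in> {0<..1}" for c
    using lim_sym_root_finite[of c] that conv False unfolding \<psi>_def by auto
  have "mono_on {0<..1} \<psi>"
  proof (rule mono_onI)
    fix x y :: real assume xy: "x \<in> {0<..1}" "y \<in> {0<..1}" "x \<le> y"
    have "\<forall>\<^sub>F n in sequentially. log_rate a x n \<le> log_rate a y n"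
      using eventually_ge_at_top[of 1] by (rule eventually_mono) (use xy log_rate_mono in auto)
    then show "\<psi> x \<le> \<psi> y"
      using xy by (intro tendsto_le[OF sequentially_bot \<psi>(1) \<psi>(1)]) auto
  qed
  moreover have "antimono_on {0<..1} (\<lambda>x. (\<psi> x + ln 2) / x)"
  proof (rule monotone_onI)
    fix x y :: real assume xy: "x \<in> {0<..1}" "y \<in> {0<..1}" "x \<le> y"
    have lim: "(\<lambda>n. (log_rate a c n + ln 2) / ceiling_ratio c n) \<longlonglongrightarrow> (\<psi> c + ln 2) / c"
      if "c \<in> {0<..1}" for c
      using that by (intro tendsto_intros \<psi>(1) ceiling_ratio_tendsto) auto
    have "\<forall>\<^sub>F n in sequentially. (log_rate a y n + ln 2) / ceiling_ratio y n
                                    \<le> (log_rate a x n + ln 2) / ceiling_ratio x n"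
      using eventually_ge_at_top[of 1] by (rule eventually_mono) (use xy log_rate_shifted_quotient_antimono in auto)
    then show "(\<psi> y + ln 2) / y \<le> (\<psi> x + ln 2) / x"
      using xy by (intro tendsto_le[OF sequentially_bot lim lim]) auto
  qed
  ultimately have "continuous_on {0<..1} \<psi>"
    by (intro continuous_on_if_mono_and_shifted_quotient_antimono) auto
  then have "continuous_on {0<..1} (\<lambda>c. ereal (exp (\<psi> c / c)))"
    by (intro continuous_on_ereal continuous_on_exp continuous_on_divide continuous_on_id) auto
  then show ?thesis
    by (rule continuous_on_cong[THEN iffD2, OF refl, rotated]) (simp add: \<psi>(2))
qed

end

lemma gauss_map_irrational:
  assumes "x \<in> {0<..<1}" "x \<notin> \<rat>"
  shows "gauss_map x \<in> {0<..<1}" "gauss_map x \<notin> \<rat>"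
proof -
  have "1 / x \<notin> \<rat>"
    using assms Rats_divide[OF Rats_1, of "1 / x"] by auto
  moreover have "gauss_map x = 1 / x - of_int \<lfloor>1 / x\<rfloor>"
    by (simp add: gauss_map_def frac_def)
  ultimately show nonrat: "gauss_map x \<notin> \<rat>"
    by (metis Rats_add Rats_of_int diff_add_cancel)
  have "gauss_map x \<noteq> 0" using nonrat by auto
  moreover have "0 \<le> gauss_map x" "gauss_map x < 1"
    by (simp_all add: gauss_map_def frac_lt_1)
  ultimately
  show "gauss_map x \<in> {0<..<1}" by simp
qed

lemma gauss_map_iterate_irrational:
  assumes "x \<in> {0<..<1}" "x \<notin> \<rat>"
  shows "(gauss_map ^^ j) x \<in> {0<..<1} \<and> (gauss_map ^^ j) x \<notin> \<rat>"
  by (induction j) (use assms gauss_map_irrational in auto)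

lemma one_le_cf_digit:
  assumes "\<alpha> \<in> {0<..<1}" "\<alpha> \<notin> \<rat>"
  shows "1 \<le> real (cf_digit \<alpha> i)"
proof -
  define x where "x = (gauss_map ^^ (i - 1)) \<alpha>"
  have "x \<in> {0<..<1}"
    unfolding x_def using gauss_map_iterate_irrational[OF assms] by blast
  then have "1 \<le> \<lfloor>1 / x\<rfloor>" by (simp add: one_le_floor)
  then show ?thesis unfolding cf_digit_def x_def[symmetric] by linarith
qed

lemma S_root_eq_sym_root: "S_root \<alpha> c n = sym_root (\<lambda>i. real (cf_digit \<alpha> i)) c n"
  unfolding S_root_def sym_root_def S_mean_def elem_sym_mean_def elem_sym_def ksubsets_def by simp

theorem proposition3p5:
  assumes "AE \<alpha> in lborel. (\<alpha> \<in> {0<..<1} \<and> \<alpha> \<notin> \<rat>) \<longrightarrow>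
             (\<forall>c\<in>{0<..1}. F_plus \<alpha> c = F_minus \<alpha> c)"
  shows "AE \<alpha> in lborel. (\<alpha> \<in> {0<..<1} \<and> \<alpha> \<notin> \<rat>) \<longrightarrow>
             continuous_on {0<..1} (F_lim \<alpha>)"
  using assms
proof (rule eventually_mono, intro impI)
  fix \<alpha> :: real
  assume irr: "\<alpha> \<in> {0<..<1} \<and> \<alpha> \<notin> \<rat>"
    and "\<alpha> \<in> {0<..<1} \<and> \<alpha> \<notin> \<rat> \<longrightarrow> (\<forall>c\<in>{0<..1}. F_plus \<alpha> c = F_minus \<alpha> c)"
  then have "F_plus \<alpha> c = F_minus \<alpha> c" if "c \<in> {0<..1}" for c
    using that by blast
  then have conv: "convergent (\<lambda>n. ereal (sym_root (\<lambda>i. real (cf_digit \<alpha> i)) c n))"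
    if "c \<in> {0<..1}" for c
    using that Liminf_eq_Limsup[of sequentially]
    by (auto simp: convergent_def F_plus_def F_minus_def S_root_eq_sym_root)
  show "continuous_on {0<..1} (F_lim \<alpha>)"
    unfolding F_lim_def S_root_eq_sym_root
    by (rule continuous_on_lim_sym_root) (use one_le_cf_digit irr conv in auto)
qed

end
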